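(* Let $S$ be a Stone relation algebra satisfying the point axiom, i.e., the set $\mathrm{IP}(S)$ of ideal-points of $S$ is finite and non-empty and $\top=\bigsqcup\mathrm{IP}(S)$. Let $x\in S$. Then: 1. $1=\bigsqcup\{pp^{\smile}\mid p\in\mathrm{IP}(S)\}$. 2. $x=\bigsqcup\{pp^{\smile}xqq^{\smile}\mid p,q\in\mathrm{IP}(S)\}$. 3. For each atom $a\in S$ there is $p\in\mathrm{IP}(S)$ with $a\sqsubseteq p$. 4. Every point of $S$ is an ideal-point.
   Context: A Stone relation algebra is a structure $(S,\sqcup,\sqcap,\cdot,\overline{\,\cdot\,},{}^{\smile},\bot,\top,1)$ (write $xy$ for $x\cdot y$, $\overline{x}$ for the pseudocomplement, $x^{\smile}$ for the converse) such that: $(S,\sqcup,\sqcap,\bot,\top)$ is a bounded distributive lattice with order $x\sqsubseteq y\iff x\sqcup y=y$; $x\sqcap y=\bot\iff x\sqsubseteq\overline{y}$; $\overline{x}\sqcup\overline{\overline{x}}=\top$; $\cdot$ is associative with two-sided unit $1$, distributes over $\sqcup$ on both sides, and $\bot$ is a zero of $\cdot$; $x^{\smile\smile}=x$, $(xy)^{\smile}=y^{\smile}x^{\smile}$, $(x\sqcup y)^{\smile}=x^{\smile}\sqcup y^{\smile}$; $\overline{\overline{1}}=1$; $\overline{\overline{xy}}=\overline{\overline{x}}\,\overline{\overline{y}}$; $xy\sqcap z\sqsubseteq x(y\sqcap x^{\smile}z)$. $\bigsqcup P$ is the join of a finite non-empty set $P$. $x$ is injective if $xx^{\smile}\sqsubseteq1$,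 surjective if $1\sqsubseteq x^{\smile}x$, a vector if $x\top=x$, a covector if $\top x=x$, an ideal if it is a vector and a covector, and a point if it is an injective surjective vector. An ideal-point is a point $p$ such that for all points $q$ and all ideals $x\neq\bot$, $qx\sqsubseteq p$ implies $q\sqsubseteq p$. An atom is an element $x\neq\bot$ such that $\bot\neq y\sqsubseteq x$ implies $y=x$. *)

theory Defs
  imports Main
begin

text \<open>Stone relation algebras. The lattice operations are sup/inf/bot/top with order \<le>;
  composition is (*) with unit 1; cnv is the converse, pcomp the pseudocomplement.\<close>

class stone_relation_algebra = bounded_lattice + distrib_lattice + monoid_mult +
  fixes cnv :: "'a \<Rightarrow> 'a"
    and pcomp :: "'a \<Rightarrow> 'a"
  assumes pseudo_complement: "inf x y = bot \<longleftrightarrow> x \<le> pcomp y"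
    and stone: "sup (pcomp x) (pcomp (pcomp x)) = top"
    and mult_sup_distr_right: "(sup x y) * z = sup (x * z) (y * z)"
    and mult_sup_distr_left: "z * (sup x y) = sup (z * x) (z * y)"
    and mult_bot_left: "bot * x = bot"
    and mult_bot_right: "x * bot = bot"
    and cnv_involutive: "cnv (cnv x) = x"
    and cnv_mult: "cnv (x * y) = cnv y * cnv x"
    and cnv_sup: "cnv (sup x y) = sup (cnv x) (cnv y)"
    and pp_one: "pcomp (pcomp 1) = 1"
    and pp_mult: "pcomp (pcomp (x * y)) = pcomp (pcomp x) * pcomp (pcomp y)"
    and dedekind_1: "inf (x * y) z \<le> x * inf y (cnv x * z)"
begin

definition injective :: "'a \<Rightarrow> bool" where "injective x \<longleftrightarrow> x * cnv x \<le> 1"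
definition surjective :: "'a \<Rightarrow> bool" where "surjective x \<longleftrightarrow> 1 \<le> cnv x * x"
definition vector :: "'a \<Rightarrow> bool" where "vector x \<longleftrightarrow> x * top = x"
definition covector :: "'a \<Rightarrow> bool" where "covector x \<longleftrightarrow> top * x = x"
definition ideal :: "'a \<Rightarrow> bool" where "ideal x \<longleftrightarrow> vector x \<and> covector x"
definition point :: "'a \<Rightarrow> bool" where
  "point x \<longleftrightarrow> injective x \<and> surjective x \<and> vector x"
definition ideal_point :: "'a \<Rightarrow> bool" where
  "ideal_point p \<longleftrightarrow> point p \<and>
     (\<forall>q x. point q \<and> ideal x \<and> x \<noteq> bot \<and> q * x \<le> p \<longrightarrow> q \<le> p)"
definition atom :: "'a \<Rightarrow> bool" where
  "atom x \<longleftrightarrow> x \<noteq> bot \<and> (\<forall>y. y \<noteq> bot \<and> y \<le> x \<longrightarrow> y = x)"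

end

end

theory Submission
  imports Defs
begin

text \<open>If the ideal-points join to \<open>top\<close>, every element \<open>y \<noteq> bot\<close> meets some ideal-point, since
  \<open>y = inf y top\<close> distributes over the finite join. A point \<open>q\<close> meeting an ideal-point \<open>p\<close> lies
  below it, because \<open>cnv q * p\<close> is a non-zero ideal and \<open>q * (cnv q * p) \<le> p\<close>; and comparable
  points are equal. For the identity, the
  Dedekind rule gives \<open>inf 1 p \<le> p * cnv p\<close> for every vector \<open>p\<close>, so joining over the
  ideal-points covers \<open>1 = inf 1 top\<close>, while injectivity bounds each \<open>p * cnv p\<close> by \<open>1\<close>.
  The decomposition of \<open>x\<close> follows by writing \<open>x = 1 * x * 1\<close> and distributing.\<close>

context stone_relation_algebra
begin

lemma mult_left_isotone: "x \<le> y \<Longrightarrow> x * z \<le> y * z"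
  by (metis le_iff_sup mult_sup_distr_right)

lemma mult_right_isotone: "x \<le> y \<Longrightarrow> z * x \<le> z * y"
  by (metis le_iff_sup mult_sup_distr_left)

lemma cnv_isotone: "x \<le> y \<Longrightarrow> cnv x \<le> cnv y"
  by (metis le_iff_sup cnv_sup)

lemma cnv_top: "cnv top = top"
  by (metis cnv_involutive cnv_isotone order.antisym top_greatest)

lemma Sup_fin_mult_distrib_right:
  "finite A \<Longrightarrow> A \<noteq> {} \<Longrightarrow> Sup_fin A * y = Sup_fin ((\<lambda>a. a * y) ` A)"
  by (rule Sup_fin.hom_commute) (rule mult_sup_distr_right)

lemma Sup_fin_mult_distrib_left:
  "finite A \<Longrightarrow> A \<noteq> {} \<Longrightarrow> y * Sup_fin A = Sup_fin ((\<lambda>a. y * a) ` A)"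
  by (rule Sup_fin.hom_commute) (rule mult_sup_distr_left)

lemma Sup_fin_image_mult_Sup_fin_image:
  assumes A: "finite A" "A \<noteq> {}" and B: "finite B" "B \<noteq> {}"
  shows "Sup_fin (f ` A) * Sup_fin (g ` B) = Sup_fin ((\<lambda>(a, b). f a * g b) ` (A \<times> B))"
    (is "_ = Sup_fin ?C")
proof (rule order.antisym)
  have finC: "finite ?C" and neC: "?C \<noteq> {}"
    using A B by auto
  have "f a * Sup_fin (g ` B) \<le> Sup_fin ?C" if "a \<in> A" for a
    using that B finC
    by (auto simp: Sup_fin_mult_distrib_left Sup_fin.bounded_iff intro: Sup_fin.coboundedI)
  then show "Sup_fin (f ` A) * Sup_fin (g ` B) \<le> Sup_fin ?C"
    using A by (simp add: Sup_fin_mult_distrib_right Sup_fin.bounded_iff)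
  have "f a * g b \<le> Sup_fin (f ` A) * Sup_fin (g ` B)" if "a \<in> A" "b \<in> B" for a b
    using that A B
    by (meson Sup_fin.coboundedI finite_imageI imageI mult_left_isotone mult_right_isotone
        order_trans)
  then show "Sup_fin ?C \<le> Sup_fin (f ` A) * Sup_fin (g ` B)"
    using finC neC by (auto simp: Sup_fin.bounded_iff)
qed

lemma vector_one_inf_le: "vector p \<Longrightarrow> inf 1 p \<le> p * cnv p"
  using dedekind_1[of p top 1] by (simp add: vector_def inf_commute)

lemma point_bot_trivial: "point bot \<Longrightarrow> x = bot"
  by (metis bot_unique mult_1_right mult_bot_left mult_bot_right mult_left_isotone
      point_def surjective_def)

lemma point_le_imp_eq:
  assumes p: "point p" and q: "point q" and "q \<le> p"
  shows "q = p"
proof (rule order.antisym)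
  have "p = p * 1" by simp
  also have "\<dots> \<le> p * (cnv q * q)"
    using q mult_right_isotone[of 1 "cnv q * q" p] by (simp add: point_def surjective_def)
  also have "\<dots> \<le> (p * cnv p) * q"
    using cnv_isotone[OF \<open>q \<le> p\<close>] by (simp add: mult.assoc mult_left_isotone mult_right_isotone)
  also have "\<dots> \<le> q"
    using p mult_left_isotone[of "p * cnv p" 1 q] by (simp add: point_def injective_def)
  finally show "p \<le> q" .
qed (fact \<open>q \<le> p\<close>)

lemma ideal_point_above_meeting_point:
  assumes p: "ideal_point p" and q: "point q" and meet: "inf q p \<noteq> bot"
  shows "q \<le> p"
proof -
  have pv: "p * top = p" and qv: "q * top = q" and qi: "q * cnv q \<le> 1"
    using p q by (simp_all add: ideal_point_def point_def vector_def injective_def)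
  have "top * cnv q = cnv q"
    using qv cnv_mult[of q top] cnv_top by simp
  then have "ideal (cnv q * p)"
    using pv by (simp add: ideal_def vector_def covector_def mult.assoc flip: mult.assoc[of top])
  moreover have "cnv q * p \<noteq> bot"
  proof
    assume "cnv q * p = bot"
    then have "inf (q * top) p \<le> bot"
      using dedekind_1[of q top p] by (simp add: mult_bot_right)
    then show False
      using qv meet bot_unique by simp
  qed
  moreover have "q * (cnv q * p) \<le> p"
    using mult_left_isotone[OF qi, of p] by (simp add: mult.assoc)
  ultimately show ?thesis
    using p q unfolding ideal_point_def by blast
qed

context
  assumes ideal_points_finite: "finite {p. ideal_point p}"
    and ideal_points_nonempty: "{p. ideal_point p} \<noteq> {}"
    and top_eq_Sup_fin_ideal_points: "top = Sup_fin {p. ideal_point p}"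
begin

lemma Sup_fin_inf_ideal_points: "y = Sup_fin {inf y p | p. ideal_point p}"
  using inf_Sup1_distrib[OF ideal_points_finite ideal_points_nonempty, of y]
  by (simp flip: top_eq_Sup_fin_ideal_points)

lemma ex_ideal_point_meet:
  assumes "y \<noteq> bot"
  shows "\<exists>p. ideal_point p \<and> inf y p \<noteq> bot"
proof (rule ccontr)
  assume "\<nexists>p. ideal_point p \<and> inf y p \<noteq> bot"
  then have "Sup_fin {inf y p | p. ideal_point p} \<le> bot"
    using ideal_points_finite ideal_points_nonempty by (auto simp: Sup_fin.bounded_iff)
  then show False
    using assms Sup_fin_inf_ideal_points[of y] bot_unique by simp
qed

lemma one_eq_Sup_fin_ideal_points: "1 = Sup_fin {p * cnv p | p. ideal_point p}"
  (is "_ = Sup_fin ?P")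
proof (rule order.antisym)
  have finP: "finite ?P" and neP: "?P \<noteq> {}"
    using ideal_points_finite ideal_points_nonempty by auto
  have "inf 1 p \<le> Sup_fin ?P" if "ideal_point p" for p
  proof -
    have "inf 1 p \<le> p * cnv p"
      using that by (simp add: vector_one_inf_le ideal_point_def point_def)
    also have "\<dots> \<le> Sup_fin ?P"
      using that finP by (auto intro: Sup_fin.coboundedI)
    finally show ?thesis .
  qed
  then have "Sup_fin {inf 1 p | p. ideal_point p} \<le> Sup_fin ?P"
    using ideal_points_finite ideal_points_nonempty by (auto simp: Sup_fin.bounded_iff)
  then show "1 \<le> Sup_fin ?P"
    by (simp flip: Sup_fin_inf_ideal_points)
  show "Sup_fin ?P \<le> 1"
    using finP neP by (auto simp: Sup_fin.bounded_iff ideal_point_def point_def injective_def)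
qed

lemma Sup_fin_ideal_point_blocks:
  "x = Sup_fin {p * cnv p * x * q * cnv q | p q. ideal_point p \<and> ideal_point q}"
proof -
  let ?I = "{p. ideal_point p}"
  have P: "{p * cnv p | p. ideal_point p} = (\<lambda>p. p * cnv p) ` ?I"
    by auto
  have "x = Sup_fin ((\<lambda>p. p * cnv p) ` ?I) * x * Sup_fin ((\<lambda>q. q * cnv q) ` ?I)"
    by (simp flip: P one_eq_Sup_fin_ideal_points)
  also have "\<dots> = Sup_fin ((\<lambda>p. p * cnv p * x) ` ?I) * Sup_fin ((\<lambda>q. q * cnv q) ` ?I)"
    using ideal_points_finite ideal_points_nonempty
    by (simp add: Sup_fin_mult_distrib_right image_image)
  also have "\<dots> = Sup_fin ((\<lambda>(p, q). p * cnv p * x * (q * cnv q)) ` (?I \<times> ?I))"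
    using ideal_points_finite ideal_points_nonempty by (intro Sup_fin_image_mult_Sup_fin_image)
  also have "(\<lambda>(p, q). p * cnv p * x * (q * cnv q)) = (\<lambda>(p, q). p * cnv p * x * q * cnv q)"
    by (simp add: mult.assoc)
  also have "(\<lambda>(p, q). p * cnv p * x * q * cnv q) ` (?I \<times> ?I)
      = {p * cnv p * x * q * cnv q | p q. ideal_point p \<and> ideal_point q}"
    by auto
  finally show ?thesis .
qed

lemma atom_le_ideal_point:
  assumes "atom a"
  shows "\<exists>p. ideal_point p \<and> a \<le> p"
proof -
  obtain p where "ideal_point p" "inf a p \<noteq> bot"
    using assms ex_ideal_point_meet by (auto simp: atom_def)
  moreover have "inf a p = a"
    using assms \<open>inf a p \<noteq> bot\<close> by (simp add: atom_def)
  ultimately show ?thesis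
    by (metis inf.absorb_iff1)
qed

lemma point_imp_ideal_point:
  assumes q: "point q"
  shows "ideal_point q"
proof (cases "q = bot")
  case True
  then have "y = bot" for y
    using q point_bot_trivial by simp
  then show ?thesis
    using q unfolding ideal_point_def by blast
next
  case False
  then obtain p where p: "ideal_point p" and meet: "inf q p \<noteq> bot"
    using ex_ideal_point_meet by blast
  have "q \<le> p"
    using p q meet by (rule ideal_point_above_meeting_point)
  then have "q = p"
    using p q point_le_imp_eq by (simp add: ideal_point_def)
  with p show ?thesis
    by simp
qed

end

end

theorem mainTheorem12:
  fixes x :: "'a::stone_relation_algebra"
  assumes "finite {p::'a. ideal_point p}"
    and "{p::'a. ideal_point p} \<noteq> {}"
    and "top = Sup_fin {p::'a. ideal_point p}"
  shows "1 = Sup_fin {p * cnv p | p::'a. ideal_point p}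
    \<and> x = Sup_fin {p * cnv p * x * q * cnv q | p q. ideal_point p \<and> ideal_point q}
    \<and> (\<forall>a::'a. atom a \<longrightarrow> (\<exists>p. ideal_point p \<and> a \<le> p))
    \<and> (\<forall>p::'a. point p \<longrightarrow> ideal_point p)"
  using one_eq_Sup_fin_ideal_points[OF assms] Sup_fin_ideal_point_blocks[OF assms]
    atom_le_ideal_point[OF assms] point_imp_ideal_point[OF assms]
  by blast

end
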